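(* Let $G$ be a closed graph on a compact metrizable space $X$. Then: (a) $P_G$ is $\sigma$-centered iff $\chi(G)\leq\aleph_0$; (b) $P_G$ is $\sigma$-liminf-centered iff $\lambda(G)\leq\aleph_0$.
   Context: A graph $G$ on $X$ is a symmetric irreflexive relation, closed if closed in $(X\times X)\setminus$ diagonal. A $G$-anticlique is a set with no two distinct $G$-connected points; $\chi(G)$ is the least size of a family of $G$-anticliques covering $X$. A set $A\subset X$ is $G$-loose if every $x\in X$ has an open neighborhood containing no elements of $A$ that are $G$-connected to $x$; $\lambda(G)$ is the least size of a family of $G$-loose sets covering $X$. $P_G$ is the poset of pairs $p=\langle a_p,o_p\rangle$ with $a_p\subset X$ a finite $G$-anticlique and $o_p\supset a_p$ open, ordered by $q\leq p$ iff $a_p\subset a_q$ and $o_q\subset o_p$. For a poset $P$, a set $A\subset P$ is centered if every finite $b\subset A$ has a common lower bound in $P$; $P$ is $\sigma$-centered if it is a countable union of centered sets. A set $A\subset P$ is liminf centered if for every sequence $\langle p_i\colon i\in\omega\rangle$ of elements of $A$ there is $q\in P$ such that for every $r\leq q$ the set $\{i\in\omega\colon p_i$ is compatible with $r\}$ is infinite; $P$ is $\sigma$-liminf-centered if it is a countable union of liminf centered sets. *)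

theory Defs
  imports "HOL-Analysis.Analysis"
begin

definition is_graph :: "'a topology \<Rightarrow> ('a \<times> 'a) set \<Rightarrow> bool" where
  "is_graph T G \<longleftrightarrow> G \<subseteq> topspace T \<times> topspace T \<and> sym G \<and> (\<forall>x. (x, x) \<notin> G)"

definition closed_graph :: "'a topology \<Rightarrow> ('a \<times> 'a) set \<Rightarrow> bool" where
  "closed_graph T G \<longleftrightarrow> is_graph T G \<and>
     closedin (subtopology (prod_topology T T)
                 ((topspace T \<times> topspace T) - {(x, x) | x. True})) G"

definition anticlique :: "'a topology \<Rightarrow> ('a \<times> 'a) set \<Rightarrow> 'a set \<Rightarrow> bool" where
  "anticlique T G A \<longleftrightarrow> A \<subseteq> topspace T \<and> (\<forall>x\<in>A. \<forall>y\<in>A. x \<noteq> y \<longrightarrow> (x, y) \<notin> G)"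

definition loose :: "'a topology \<Rightarrow> ('a \<times> 'a) set \<Rightarrow> 'a set \<Rightarrow> bool" where
  "loose T G A \<longleftrightarrow> A \<subseteq> topspace T \<and>
     (\<forall>x\<in>topspace T. \<exists>U. openin T U \<and> x \<in> U \<and> (\<forall>a\<in>A \<inter> U. (x, a) \<notin> G))"

definition chi_countable :: "'a topology \<Rightarrow> ('a \<times> 'a) set \<Rightarrow> bool" where
  "chi_countable T G \<longleftrightarrow> (\<exists>F. countable F \<and> (\<forall>A\<in>F. anticlique T G A) \<and> topspace T \<subseteq> \<Union>F)"

definition lambda_countable :: "'a topology \<Rightarrow> ('a \<times> 'a) set \<Rightarrow> bool" where
  "lambda_countable T G \<longleftrightarrow> (\<exists>F. countable F \<and> (\<forall>A\<in>F. loose T G A) \<and> topspace T \<subseteq> \<Union>F)"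

definition PG :: "'a topology \<Rightarrow> ('a \<times> 'a) set \<Rightarrow> ('a set \<times> 'a set) set" where
  "PG T G = {(a, U). finite a \<and> anticlique T G a \<and> openin T U \<and> a \<subseteq> U}"

definition PG_le :: "('a set \<times> 'a set) \<Rightarrow> ('a set \<times> 'a set) \<Rightarrow> bool" where
  "PG_le q p \<longleftrightarrow> fst p \<subseteq> fst q \<and> snd q \<subseteq> snd p"

definition centered :: "'p set \<Rightarrow> ('p \<Rightarrow> 'p \<Rightarrow> bool) \<Rightarrow> 'p set \<Rightarrow> bool" where
  "centered P le A \<longleftrightarrow> A \<subseteq> P \<and>
     (\<forall>b. finite b \<and> b \<subseteq> A \<longrightarrow> (\<exists>q\<in>P. \<forall>p\<in>b. le q p))"

definition sigma_centered :: "'p set \<Rightarrow> ('p \<Rightarrow> 'p \<Rightarrow> bool) \<Rightarrow> bool" where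
  "sigma_centered P le \<longleftrightarrow> (\<exists>F. countable F \<and> (\<forall>A\<in>F. centered P le A) \<and> \<Union>F = P)"

definition compatible :: "'p set \<Rightarrow> ('p \<Rightarrow> 'p \<Rightarrow> bool) \<Rightarrow> 'p \<Rightarrow> 'p \<Rightarrow> bool" where
  "compatible P le p r \<longleftrightarrow> (\<exists>s\<in>P. le s p \<and> le s r)"

definition liminf_centered :: "'p set \<Rightarrow> ('p \<Rightarrow> 'p \<Rightarrow> bool) \<Rightarrow> 'p set \<Rightarrow> bool" where
  "liminf_centered P le A \<longleftrightarrow> A \<subseteq> P \<and>
     (\<forall>s :: nat \<Rightarrow> 'p. range s \<subseteq> A \<longrightarrow>
        (\<exists>q\<in>P. \<forall>r\<in>P. le r q \<longrightarrow> infinite {i. compatible P le (s i) r}))"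

definition sigma_liminf_centered :: "'p set \<Rightarrow> ('p \<Rightarrow> 'p \<Rightarrow> bool) \<Rightarrow> bool" where
  "sigma_liminf_centered P le \<longleftrightarrow>
     (\<exists>F. countable F \<and> (\<forall>A\<in>F. liminf_centered P le A) \<and> \<Union>F = P)"

end

theory Submission
  imports Defs
begin

(* A condition ({x}, X) is in P_G for every point x, so a countable family of centered
   (liminf centered) sets covering P_G gives, for each member C, the set of those x with
   ({x}, X) in C; centeredness makes it an anticlique, and liminf centeredness makes it loose,
   because a sequence of G-neighbours a_i converging to x cannot have the conditions
   ({a_i}, X) compatible with infinitely many extensions of a common condition.
   Conversely, fix a countable base and a countable cover by anticliques (loose sets). Every
   condition (a, o) lies in a piece indexed by finitely many triples (b, c, L): basic open
   sets with closure of b inside c inside o, pairwise G-unrelated c's, and a meeting each b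
   in a single point of L. Conditions of one piece merge into a common extension. For a
   sequence in one piece, compactness gives cluster points y_(b,c,L) of the points in b,
   which lie in c and so form a condition q; since L is loose, below any r <= q infinitely
   many members of the sequence remain compatible with r. *)

lemma closed_graph_separation:
  assumes "closed_graph T G" and "z \<in> topspace T" and "w \<in> topspace T"
    and "z \<noteq> w" and "(z, w) \<notin> G"
  obtains V W where "openin T V" "openin T W" "z \<in> V" "w \<in> W" "\<forall>a\<in>V. \<forall>b\<in>W. (a, b) \<notin> G"
proof -
  let ?X = "topspace T \<times> topspace T"
  obtain D where D: "closedin (prod_topology T T) D" and G: "G = D \<inter> (?X - {(x, x) | x. True})"
    using assms(1) unfolding closed_graph_def closedin_subtopology by blast
  have "openin (prod_topology T T) (?X - D)"
    using D by (simp add: closedin_def)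
  moreover have "(z, w) \<in> ?X - D"
    using assms(2-5) G by auto
  ultimately obtain V W where "openin T V" "openin T W" "z \<in> V" "w \<in> W" "V \<times> W \<subseteq> ?X - D"
    unfolding openin_prod_topology_alt by meson
  with G show thesis using that by blast
qed

lemma compact_space_cluster_point:
  assumes "compact_space Y" and "range f \<subseteq> topspace Y"
  obtains y where "y \<in> topspace Y" "\<And>U. openin Y U \<Longrightarrow> y \<in> U \<Longrightarrow> infinite {m::nat. f m \<in> U}"
proof -
  have "\<exists>y\<in>topspace Y. \<forall>U. openin Y U \<and> y \<in> U \<longrightarrow> infinite {m. f m \<in> U}"
  proof (rule ccontr)
    assume "\<not> ?thesis"
    then have ex: "\<forall>y\<in>topspace Y. \<exists>U. openin Y U \<and> y \<in> U \<and> finite {m. f m \<in> U}"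
      by blast
    obtain U where U: "\<forall>y\<in>topspace Y. openin Y (U y) \<and> y \<in> U y \<and> finite {m. f m \<in> U y}"
      using bchoice[OF ex] by blast
    moreover have "topspace Y \<subseteq> \<Union>(U ` topspace Y)"
      using U by blast
    ultimately obtain \<F> where \<F>: "finite \<F>" "\<F> \<subseteq> U ` topspace Y" "topspace Y \<subseteq> \<Union>\<F>"
      using assms(1)[unfolded compact_space_alt, rule_format, of "U ` topspace Y"] U by blast
    have "UNIV \<subseteq> (\<Union>V\<in>\<F>. {m. f m \<in> V})"
    proof
      fix m
      have "f m \<in> \<Union>\<F>"
        using assms(2) \<F>(3) by auto
      then show "m \<in> (\<Union>V\<in>\<F>. {m. f m \<in> V})" by auto
    qed
    moreover have "finite (\<Union>V\<in>\<F>. {m. f m \<in> V})"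
      using \<F> U by auto
    ultimately show False
      using finite_subset infinite_UNIV_nat by blast
  qed
  with that show thesis by blast
qed

lemma compact_space_cluster_point_finite_family:
  fixes f :: "nat \<Rightarrow> 'i \<Rightarrow> 'a"
  assumes "compact_space T" and "finite S" and "\<And>m t. t \<in> S \<Longrightarrow> f m t \<in> topspace T"
  shows "\<exists>y. (\<forall>t\<in>S. y t \<in> topspace T) \<and>
    (\<forall>W. (\<forall>t\<in>S. openin T (W t) \<and> y t \<in> W t) \<longrightarrow> infinite {m. \<forall>t\<in>S. f m t \<in> W t})"
proof -
  define Y where "Y = product_topology (\<lambda>_. T) S"
  have Y: "compact_space Y"
    unfolding Y_def using assms(1) by (simp add: compact_space_product_topology)
  have range: "range (\<lambda>m. restrict (f m) S) \<subseteq> topspace Y"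
    unfolding Y_def using assms(3) by auto
  obtain y where y: "y \<in> topspace Y"
    and cluster: "\<And>U. openin Y U \<Longrightarrow> y \<in> U \<Longrightarrow> infinite {m. restrict (f m) S \<in> U}"
    by (rule compact_space_cluster_point[OF Y range]) blast
  have "y t \<in> topspace T" if "t \<in> S" for t
    using y that unfolding Y_def by auto
  moreover have "infinite {m. \<forall>t\<in>S. f m t \<in> W t}"
    if W: "\<forall>t\<in>S. openin T (W t) \<and> y t \<in> W t" for W
  proof -
    have "openin Y (Pi\<^sub>E S W)"
      unfolding Y_def openin_PiE_gen using assms(2) W by auto
    moreover have "y \<in> Pi\<^sub>E S W"
      using y W unfolding Y_def by (auto simp: PiE_iff)
    ultimately have "infinite {m. restrict (f m) S \<in> Pi\<^sub>E S W}"
      by (rule cluster)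
    then show ?thesis
      by (rule infinite_super[rotated]) auto
  qed
  ultimately show ?thesis
    by blast
qed

lemma (in Metric_space) compact_space_imp_second_countable:
  assumes "compact_space mtopology"
  shows "second_countable mtopology"
proof -
  have "\<exists>N. finite N \<and> N \<subseteq> M \<and> M \<subseteq> (\<Union>c\<in>N. mball c (1 / Suc n))" for n :: nat
  proof -
    have "M \<subseteq> \<Union>((\<lambda>x. mball x (1 / Suc n)) ` M)" by auto
    then obtain \<F> where "finite \<F>" "\<F> \<subseteq> (\<lambda>x. mball x (1 / Suc n)) ` M" "M \<subseteq> \<Union>\<F>"
      using assms unfolding compact_space_alt by (metis (no_types, lifting) imageE openin_mball topspace_mtopology)
    then show ?thesis
      by (metis finite_subset_image)
  qed
  then obtain N where N: "\<And>n. finite (N n) \<and> N n \<subseteq> M \<and> M \<subseteq> (\<Union>c\<in>N n. mball c (1 / Suc n))"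
    by metis
  define \<B> where "\<B> = (\<Union>n. (\<lambda>c. mball c (1 / Suc n)) ` N n)"
  have "\<exists>V\<in>\<B>. x \<in> V \<and> V \<subseteq> U" if U: "openin mtopology U" "x \<in> U" for U x
  proof -
    obtain r where r: "r > 0" "mball x r \<subseteq> U"
      using U openin_mtopology by blast
    obtain n :: nat where n: "1 / Suc n < r / 2"
      using reals_Archimedean[of "r/2"] r(1) by (auto simp: inverse_eq_divide)
    have "x \<in> M" using U openin_mtopology by blast
    then obtain c where c: "c \<in> N n" "x \<in> mball c (1 / Suc n)"
      using N[of n] by blast
    have "mball c (1 / Suc n) \<subseteq> mball x r"
    proof
      fix z assume z: "z \<in> mball c (1 / Suc n)"
      have "d x z \<le> d x c + d c z"
        using c z by (auto intro: triangle)
      also have "\<dots> < r"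
        using c z n by (simp add: commute)
      finally show "z \<in> mball x r"
        using c z by simp
    qed
    then show ?thesis
      using c r unfolding \<B>_def by blast
  qed
  moreover have "countable \<B>"
    unfolding \<B>_def using N by (simp add: countable_finite)
  moreover have "\<forall>V\<in>\<B>. openin mtopology V"
    unfolding \<B>_def by auto
  ultimately show ?thesis
    unfolding second_countable_def by (intro exI[of _ \<B>]) blast
qed

lemma regular_space_base_closure_shrink:
  assumes "regular_space T" and "\<forall>V\<in>\<B>. openin T V"
    and "\<forall>U x. openin T U \<and> x \<in> U \<longrightarrow> (\<exists>V\<in>\<B>. x \<in> V \<and> V \<subseteq> U)"
    and "openin T U" and "x \<in> U"
  obtains b c where "b \<in> \<B>" "c \<in> \<B>" "x \<in> b" "T closure_of b \<subseteq> c" "c \<subseteq> U"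
proof -
  obtain c where c: "c \<in> \<B>" "x \<in> c" "c \<subseteq> U"
    using assms(3-5) by blast
  then obtain U' V where "openin T U'" "closedin T V" "x \<in> U'" "U' \<subseteq> V" "V \<subseteq> c"
    using assms(1,2) unfolding neighbourhood_base_of_closedin[symmetric] neighbourhood_base_of by metis
  moreover obtain b where "b \<in> \<B>" "x \<in> b" "b \<subseteq> U'"
    using assms(3) calculation by blast
  ultimately show thesis
    using that c closure_of_minimal[of b V T] by blast
qed

lemma finite_anticlique_separating_nbhds:
  assumes "closed_graph T G" and "Hausdorff_space T" and "finite a" and "anticlique T G a"
  obtains N where "\<And>x. x \<in> a \<Longrightarrow> openin T (N x) \<and> x \<in> N x"
    "\<And>x y. x \<in> a \<Longrightarrow> y \<in> a \<Longrightarrow> x \<noteq> y \<Longrightarrow> disjnt (N x) (N y) \<and> (\<forall>u\<in>N x. \<forall>v\<in>N y. (u, v) \<notin> G)"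
proof -
  have "\<exists>V W. openin T V \<and> openin T W \<and> x \<in> V \<and> y \<in> W \<and> disjnt V W \<and> (\<forall>u\<in>V. \<forall>v\<in>W. (u, v) \<notin> G)"
    if "x \<in> a" "y \<in> a" "x \<noteq> y" for x y
  proof -
    have xy: "x \<in> topspace T" "y \<in> topspace T" "(x, y) \<notin> G"
      using assms(4) that unfolding anticlique_def by auto
    obtain V1 W1 where "openin T V1" "openin T W1" "x \<in> V1" "y \<in> W1" "\<forall>u\<in>V1. \<forall>v\<in>W1. (u, v) \<notin> G"
      using closed_graph_separation[OF assms(1) xy(1,2) \<open>x \<noteq> y\<close> xy(3)] by blast
    moreover obtain V2 W2 where "openin T V2" "openin T W2" "x \<in> V2" "y \<in> W2" "disjnt V2 W2"
      using assms(2) xy \<open>x \<noteq> y\<close> unfolding Hausdorff_space_def by blast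
    ultimately show ?thesis
      by (intro exI[of _ "V1 \<inter> V2"] exI[of _ "W1 \<inter> W2"]) (auto simp: disjnt_def)
  qed
  then obtain V W where VW: "\<And>x y. x \<in> a \<Longrightarrow> y \<in> a \<Longrightarrow> x \<noteq> y \<Longrightarrow>
      openin T (V x y) \<and> openin T (W x y) \<and> x \<in> V x y \<and> y \<in> W x y \<and> disjnt (V x y) (W x y) \<and>
      (\<forall>u\<in>V x y. \<forall>v\<in>W x y. (u, v) \<notin> G)"
    by metis
  define N where "N x = topspace T \<inter> \<Inter>((\<lambda>y. V x y \<inter> W y x) ` (a - {x}))" for x
  show thesis
  proof (rule that)
    show "openin T (N x) \<and> x \<in> N x" if "x \<in> a" for x
    proof
      show "openin T (N x)"
        unfolding N_def using that VW assms(3) by (intro openin_Int_Inter) auto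
      show "x \<in> N x"
        unfolding N_def using that VW assms(4) by (auto simp: anticlique_def)
    qed
    show "disjnt (N x) (N y) \<and> (\<forall>u\<in>N x. \<forall>v\<in>N y. (u, v) \<notin> G)" if "x \<in> a" "y \<in> a" "x \<noteq> y" for x y
    proof -
      have "N x \<subseteq> V x y" "N y \<subseteq> W x y"
        unfolding N_def using that by auto
      then show ?thesis
        using VW[OF that] unfolding disjnt_def by blast
    qed
  qed
qed

lemma PG_iff:
  "p \<in> PG T G \<longleftrightarrow> finite (fst p) \<and> fst p \<subseteq> topspace T \<and>
     (\<forall>u\<in>fst p. \<forall>v\<in>fst p. u \<noteq> v \<longrightarrow> (u, v) \<notin> G) \<and> openin T (snd p) \<and> fst p \<subseteq> snd p"
  by (cases p) (auto simp: PG_def anticlique_def)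

lemma singleton_in_PG: "x \<in> topspace T \<Longrightarrow> ({x}, topspace T) \<in> PG T G"
  by (simp add: PG_iff)

lemma PG_compatibleI:
  assumes "sym G" and "p \<in> PG T G" and "r \<in> PG T G"
    and "fst p \<subseteq> snd r" and "fst r \<subseteq> snd p"
    and "\<And>u v. u \<in> fst p \<Longrightarrow> v \<in> fst r \<Longrightarrow> u \<noteq> v \<Longrightarrow> (u, v) \<notin> G"
  shows "compatible (PG T G) PG_le p r"
proof -
  have "\<forall>u\<in>fst p \<union> fst r. \<forall>v\<in>fst p \<union> fst r. u \<noteq> v \<longrightarrow> (u, v) \<notin> G"
    using assms(2,3,6) symD[OF assms(1)] unfolding PG_iff by blast
  then have "(fst p \<union> fst r, snd p \<inter> snd r) \<in> PG T G"
    using assms(2-5) unfolding PG_iff by (auto intro: openin_Int)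
  then show ?thesis
    unfolding compatible_def PG_le_def by (intro bexI[of _ "(fst p \<union> fst r, snd p \<inter> snd r)"]) auto
qed

lemma PG_escapes_convergent_sequence:
  assumes "Hausdorff_space T" and "is_graph T G" and "q \<in> PG T G"
    and "limitin T a x sequentially" and "\<And>i. (x, a i) \<in> G"
  shows "\<exists>r\<in>PG T G. PG_le r q \<and> finite {i. compatible (PG T G) PG_le ({a i}, topspace T) r}"
proof (cases "x \<in> fst q")
  case True
  have "\<not> compatible (PG T G) PG_le ({a i}, topspace T) q" for i
  proof
    assume "compatible (PG T G) PG_le ({a i}, topspace T) q"
    then obtain s where "s \<in> PG T G" "a i \<in> fst s" "x \<in> fst s"
      using True unfolding compatible_def PG_le_def by auto
    moreover have "x \<noteq> a i"
      using assms(2,5) unfolding is_graph_def by metis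
    ultimately show False
      using assms(5) unfolding PG_iff by blast
  qed
  then show ?thesis
    using assms(3) by (intro bexI[of _ q]) (auto simp: PG_le_def)
next
  case False
  have "compactin T {x}" "compactin T (fst q)"
    using assms(3,4) by (auto simp: PG_iff limitin_def intro: finite_imp_compactin)
  moreover have "disjnt {x} (fst q)"
    using False by simp
  ultimately obtain U V where UV: "openin T U" "openin T V" "{x} \<subseteq> U" "fst q \<subseteq> V" "disjnt U V"
    by (rule Hausdorff_space_compact_separation[OF assms(1)])
  define r where "r = (fst q, snd q \<inter> V)"
  have "r \<in> PG T G" "PG_le r q"
    using assms(3) UV unfolding r_def PG_iff PG_le_def by (auto intro: openin_Int)
  moreover obtain N where N: "\<And>i. i \<ge> N \<Longrightarrow> a i \<in> U"
    using assms(4) UV(1,3) unfolding limitin_def eventually_sequentially by auto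
  have "{i. compatible (PG T G) PG_le ({a i}, topspace T) r} \<subseteq> {..<N}"
  proof (rule subsetI, rule ccontr)
    fix i assume "i \<in> {i. compatible (PG T G) PG_le ({a i}, topspace T) r}" and "i \<notin> {..<N}"
    then obtain s where "s \<in> PG T G" "a i \<in> fst s" "snd s \<subseteq> V"
      unfolding compatible_def PG_le_def r_def by auto
    then have "a i \<in> V"
      unfolding PG_iff by blast
    with N[of i] \<open>i \<notin> {..<N}\<close> UV(5) show False
      unfolding disjnt_def by auto
  qed
  ultimately show ?thesis
    by (meson finite_lessThan finite_subset)
qed

definition singleton_trace :: "'a topology \<Rightarrow> ('a set \<times> 'a set) set \<Rightarrow> 'a set" where
  "singleton_trace T C = {x \<in> topspace T. ({x}, topspace T) \<in> C}"

lemma topspace_subset_Union_singleton_trace: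
  assumes "\<Union>\<F> = PG T G"
  shows "topspace T \<subseteq> \<Union>(singleton_trace T ` \<F>)"
  using assms singleton_in_PG unfolding singleton_trace_def by fastforce

lemma anticlique_singleton_trace:
  assumes "centered (PG T G) PG_le C"
  shows "anticlique T G (singleton_trace T C)"
  unfolding anticlique_def
proof (intro conjI ballI impI)
  show "singleton_trace T C \<subseteq> topspace T"
    unfolding singleton_trace_def by blast
  fix x y assume "x \<in> singleton_trace T C" "y \<in> singleton_trace T C" "x \<noteq> y"
  then have "{({x}, topspace T), ({y}, topspace T)} \<subseteq> C"
    unfolding singleton_trace_def by auto
  then have "\<exists>q\<in>PG T G. \<forall>p\<in>{({x}, topspace T), ({y}, topspace T)}. PG_le q p"
    using conjunct2[OF assms[unfolded centered_def], rule_format, of "{({x}, topspace T), ({y}, topspace T)}"]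
    by simp
  then obtain q where "q \<in> PG T G" "x \<in> fst q" "y \<in> fst q"
    unfolding PG_le_def by auto
  with \<open>x \<noteq> y\<close> show "(x, y) \<notin> G"
    unfolding PG_iff by blast
qed

lemma chi_countable_if_sigma_centered:
  assumes "sigma_centered (PG T G) PG_le"
  shows "chi_countable T G"
proof -
  obtain \<F> where "countable \<F>" "\<forall>C\<in>\<F>. centered (PG T G) PG_le C" "\<Union>\<F> = PG T G"
    using assms unfolding sigma_centered_def by metis
  then show ?thesis
    unfolding chi_countable_def
    by (intro exI[of _ "singleton_trace T ` \<F>"] conjI countable_image ballI
        topspace_subset_Union_singleton_trace) (auto intro: anticlique_singleton_trace)
qed

lemma (in Metric_space) loose_singleton_trace:
  assumes "is_graph mtopology G" and "liminf_centered (PG mtopology G) PG_le C"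
  shows "loose mtopology G (singleton_trace mtopology C)"
  unfolding loose_def
proof (intro conjI ballI)
  show "singleton_trace mtopology C \<subseteq> topspace mtopology"
    unfolding singleton_trace_def by blast
  fix x assume x: "x \<in> topspace mtopology"
  let ?A = "{a \<in> singleton_trace mtopology C. (x, a) \<in> G}"
  show "\<exists>U. openin mtopology U \<and> x \<in> U \<and> (\<forall>a\<in>singleton_trace mtopology C \<inter> U. (x, a) \<notin> G)"
  proof (rule ccontr)
    assume "\<not> ?thesis"
    then have "x \<in> mtopology closure_of ?A"
      using x unfolding in_closure_of by blast
    then obtain a where a: "range a \<subseteq> ?A \<inter> M" "limitin mtopology a x sequentially"
      unfolding closure_of_sequentially by blast
    have "range (\<lambda>i. ({a i}, M)) \<subseteq> C"
      using a(1) unfolding singleton_trace_def by auto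
    then obtain q where "q \<in> PG mtopology G"
      and q: "\<And>r. r \<in> PG mtopology G \<Longrightarrow> PG_le r q \<Longrightarrow> infinite {i. compatible (PG mtopology G) PG_le ({a i}, M) r}"
      using assms(2) unfolding liminf_centered_def by (metis topspace_mtopology)
    moreover have "\<And>i. (x, a i) \<in> G"
      using a(1) by auto
    ultimately show False
      using PG_escapes_convergent_sequence[OF Hausdorff_space_mtopology assms(1)] a(2) by fastforce
  qed
qed

lemma lambda_countable_if_sigma_liminf_centered:
  assumes "metrizable_space T" and "is_graph T G" and "sigma_liminf_centered (PG T G) PG_le"
  shows "lambda_countable T G"
proof -
  obtain M d where "Metric_space M d" and T: "T = Metric_space.mtopology M d"
    using assms(1) unfolding metrizable_space_def by blast
  obtain \<F> where "countable \<F>" "\<forall>C\<in>\<F>. liminf_centered (PG T G) PG_le C" "\<Union>\<F> = PG T G"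
    using assms(3) unfolding sigma_liminf_centered_def by metis
  then show ?thesis
    unfolding lambda_countable_def
    by (intro exI[of _ "singleton_trace T ` \<F>"] conjI countable_image ballI
        topspace_subset_Union_singleton_trace)
      (auto simp: T intro: Metric_space.loose_singleton_trace[OF \<open>Metric_space M d\<close>] assms(2)[unfolded T])
qed

definition PG_piece ::
  "'a topology \<Rightarrow> ('a \<times> 'a) set \<Rightarrow> ('a set \<times> 'a set \<times> 'a set) set \<Rightarrow> ('a set \<times> 'a set) set" where
  "PG_piece T G S = {p \<in> PG T G.
     (\<forall>(b, c, L)\<in>S. T closure_of b \<subseteq> c \<and> openin T c \<and> c \<subseteq> snd p \<and> (\<exists>x\<in>L. fst p \<inter> b = {x})) \<and>
     fst p \<subseteq> \<Union>(fst ` S) \<and>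
     (\<forall>(b, c, L)\<in>S. \<forall>(b', c', L')\<in>S. (b, c, L) \<noteq> (b', c', L') \<longrightarrow> (\<forall>u\<in>c. \<forall>v\<in>c'. (u, v) \<notin> G))}"

lemma PG_pieceD:
  assumes "p \<in> PG_piece T G S"
  shows PG_piece_in_PG: "p \<in> PG T G"
    and PG_piece_component: "\<And>b c L. (b, c, L) \<in> S \<Longrightarrow>
      T closure_of b \<subseteq> c \<and> openin T c \<and> c \<subseteq> snd p \<and> (\<exists>x\<in>L. fst p \<inter> b = {x})"
    and PG_piece_covered: "fst p \<subseteq> \<Union>(fst ` S)"
    and PG_piece_separated: "\<And>b c L b' c' L' u v. (b, c, L) \<in> S \<Longrightarrow> (b', c', L') \<in> S \<Longrightarrow>
      (b, c, L) \<noteq> (b', c', L') \<Longrightarrow> u \<in> c \<Longrightarrow> v \<in> c' \<Longrightarrow> (u, v) \<notin> G"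
proof -
  have p: "p \<in> PG T G"
    and comp: "\<forall>(b, c, L)\<in>S. T closure_of b \<subseteq> c \<and> openin T c \<and> c \<subseteq> snd p \<and> (\<exists>x\<in>L. fst p \<inter> b = {x})"
    and cov: "fst p \<subseteq> \<Union>(fst ` S)"
    and sep: "\<forall>(b, c, L)\<in>S. \<forall>(b', c', L')\<in>S. (b, c, L) \<noteq> (b', c', L') \<longrightarrow> (\<forall>u\<in>c. \<forall>v\<in>c'. (u, v) \<notin> G)"
    using assms unfolding PG_piece_def by simp_all
  show "p \<in> PG T G" "fst p \<subseteq> \<Union>(fst ` S)"
    by (fact p, fact cov)
  show "T closure_of b \<subseteq> c \<and> openin T c \<and> c \<subseteq> snd p \<and> (\<exists>x\<in>L. fst p \<inter> b = {x})"
    if "(b, c, L) \<in> S" for b c L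
    using bspec[OF comp that] by simp
  show "(u, v) \<notin> G"
    if "(b, c, L) \<in> S" "(b', c', L') \<in> S" "(b, c, L) \<noteq> (b', c', L')" "u \<in> c" "v \<in> c'"
    for b c L b' c' L' u v
    using bspec[OF bspec[OF sep that(1), simplified] that(2)] that(3-5) by simp
qed

lemma PG_piece_point:
  assumes "p \<in> PG_piece T G S" and "u \<in> fst p"
  obtains b c L where "(b, c, L) \<in> S" "fst p \<inter> b = {u}" "u \<in> c" "u \<in> L"
proof -
  obtain t where "t \<in> S" "u \<in> fst t"
    using PG_piece_covered[OF assms(1)] assms(2) by blast
  then obtain b c L where t: "(b, c, L) \<in> S" "u \<in> b"
    by (cases t) auto
  then obtain x where x: "x \<in> L" "fst p \<inter> b = {x}" and cl: "T closure_of b \<subseteq> c"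
    using PG_piece_component[OF assms(1) t(1)] by blast
  have "u \<in> topspace T"
    using PG_piece_in_PG[OF assms(1)] assms(2) unfolding PG_iff by blast
  then have "u \<in> c"
    using t(2) cl closure_of_subset_Int[of T b] by blast
  moreover have "x = u"
    using x(2) t(2) assms(2) by (metis IntI singletonD)
  ultimately show thesis
    using that[OF t(1)] \<open>x \<in> L\<close> \<open>fst p \<inter> b = {x}\<close> by blast
qed

lemma PG_piece_edge_label:
  assumes "p \<in> PG_piece T G S" and "p' \<in> PG_piece T G S"
    and "u \<in> fst p" and "v \<in> fst p'" and "(u, v) \<in> G"
  obtains b c L where "(b, c, L) \<in> S" "u \<in> L" "v \<in> L"
proof -
  obtain b c L where t: "(b, c, L) \<in> S" "u \<in> c" "u \<in> L"
    using PG_piece_point[OF assms(1,3)] by metis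
  obtain b' c' L' where t': "(b', c', L') \<in> S" "v \<in> c'" "v \<in> L'"
    using PG_piece_point[OF assms(2,4)] by metis
  have "(b, c, L) = (b', c', L')"
    using PG_piece_separated[OF assms(1) t(1) t'(1) _ t(2) t'(2)] assms(5) by blast
  with t t' that show thesis by blast
qed

lemma PG_piece_common_extension:
  assumes "\<forall>(b, c, L)\<in>S. anticlique T G L"
    and "finite B" and "B \<subseteq> PG_piece T G S" and "p0 \<in> B"
  shows "(\<Union>(fst ` B), \<Union>{c | b c L. (b, c, L) \<in> S}) \<in> PG T G" (is "?q \<in> _")
proof -
  have piece: "p \<in> PG_piece T G S" if "p \<in> B" for p
    using that assms(3) by blast
  have "(u, v) \<notin> G" if uv_q: "u \<in> fst ?q" "v \<in> fst ?q" and "u \<noteq> v" for u v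
  proof
    assume uv: "(u, v) \<in> G"
    obtain p p' where "p \<in> B" "p' \<in> B" "u \<in> fst p" "v \<in> fst p'"
      using uv_q by auto
    then obtain b c L where "(b, c, L) \<in> S" "u \<in> L" "v \<in> L"
      using PG_piece_edge_label[OF piece piece _ _ uv] by metis
    then show False
      using bspec[OF assms(1) \<open>(b, c, L) \<in> S\<close>] uv \<open>u \<noteq> v\<close> unfolding anticlique_def by auto
  qed
  moreover have "finite (fst ?q)" "fst ?q \<subseteq> topspace T"
    using assms(2) PG_piece_in_PG[OF piece] unfolding PG_iff by fastforce+
  moreover have "openin T (snd ?q)"
    using PG_piece_component[OF piece[OF assms(4)]] by (auto intro!: openin_Union)
  moreover have "fst ?q \<subseteq> snd ?q"
  proof
    fix u assume "u \<in> fst ?q"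
    then obtain p where "p \<in> B" "u \<in> fst p"
      by auto
    then obtain b c L where "(b, c, L) \<in> S" "u \<in> c"
      using PG_piece_point[OF piece] by metis
    then show "u \<in> snd ?q"
      by auto
  qed
  ultimately show ?thesis
    unfolding PG_iff by blast
qed

lemma PG_piece_centered:
  assumes "\<forall>(b, c, L)\<in>S. anticlique T G L"
  shows "centered (PG T G) PG_le (PG_piece T G S)"
  unfolding centered_def
proof (intro conjI allI impI)
  show "PG_piece T G S \<subseteq> PG T G"
    using PG_piece_in_PG by blast
  fix B assume B: "finite B \<and> B \<subseteq> PG_piece T G S"
  show "\<exists>q\<in>PG T G. \<forall>p\<in>B. PG_le q p"
  proof (cases "B = {}")
    case True
    have "({}, {}) \<in> PG T G"
      by (simp add: PG_iff)
    with True show ?thesis by blast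
  next
    case False
    then obtain p0 where "p0 \<in> B" by blast
    have "PG_le (\<Union>(fst ` B), \<Union>{c | b c L. (b, c, L) \<in> S}) p" if "p \<in> B" for p
      using that B PG_piece_component[of p T G S] unfolding PG_le_def by fastforce
    then show ?thesis
      using PG_piece_common_extension[OF assms _ _ \<open>p0 \<in> B\<close>] B by blast
  qed
qed

lemma PG_loose_nbhd:
  assumes "closed_graph T G" and "r \<in> PG T G" and "y \<in> fst r" and "loose T G L"
  obtains W where "openin T W" "y \<in> W" "W \<subseteq> snd r" "\<forall>u\<in>L \<inter> W. \<forall>z\<in>fst r. u \<noteq> z \<longrightarrow> (u, z) \<notin> G"
proof -
  have symG: "sym G" and r: "finite (fst r)" "fst r \<subseteq> topspace T" "openin T (snd r)" "fst r \<subseteq> snd r"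
    and anti: "\<forall>u\<in>fst r. \<forall>v\<in>fst r. u \<noteq> v \<longrightarrow> (u, v) \<notin> G"
    using assms(1,2) unfolding closed_graph_def is_graph_def PG_iff by auto
  obtain U where U: "openin T U" "y \<in> U" "\<forall>a\<in>L \<inter> U. (y, a) \<notin> G"
    using assms(3,4) r(2) unfolding loose_def by blast
  have "\<exists>V. openin T V \<and> y \<in> V \<and> (\<forall>b\<in>V. (z, b) \<notin> G)" if "z \<in> fst r - {y}" for z
  proof -
    have "z \<in> topspace T" "y \<in> topspace T" "z \<noteq> y" "(z, y) \<notin> G"
      using that assms(3) r(2) anti by auto
    then show ?thesis
      by (metis closed_graph_separation[OF assms(1)])
  qed
  then obtain V where V: "\<And>z. z \<in> fst r - {y} \<Longrightarrow> openin T (V z) \<and> y \<in> V z \<and> (\<forall>b\<in>V z. (z, b) \<notin> G)"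
    by metis
  define W where "W = (snd r \<inter> U) \<inter> \<Inter>(V ` (fst r - {y}))"
  show thesis
  proof (rule that)
    show "openin T W"
      unfolding W_def using r U V by (intro openin_Int_Inter openin_Int) auto
    show "y \<in> W" "W \<subseteq> snd r"
      unfolding W_def using assms(3) r(4) U V by auto
    show "\<forall>u\<in>L \<inter> W. \<forall>z\<in>fst r. u \<noteq> z \<longrightarrow> (u, z) \<notin> G"
    proof (intro ballI impI)
      fix u z assume u: "u \<in> L \<inter> W" and z: "z \<in> fst r" and "u \<noteq> z"
      have "(z, u) \<notin> G"
      proof (cases "z = y")
        case True
        then show ?thesis using u U(3) unfolding W_def by blast
      next
        case False
        then show ?thesis using u z V[of z] unfolding W_def by blast
      qed
      then show "(u, z) \<notin> G"
        using symD[OF symG] by blast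
    qed
  qed
qed

lemma PG_piece_compatible:
  assumes "sym G" and "p \<in> PG_piece T G S" and "r \<in> PG T G"
    and "snd r \<subseteq> \<Union>{c | b c L. (b, c, L) \<in> S}"
    and "\<And>b c L. (b, c, L) \<in> S \<Longrightarrow> the_elem (fst p \<inter> b) \<in> W (b, c, L)"
    and "\<And>b c L. (b, c, L) \<in> S \<Longrightarrow>
      W (b, c, L) \<subseteq> snd r \<and> (\<forall>u\<in>L \<inter> W (b, c, L). \<forall>z\<in>fst r. u \<noteq> z \<longrightarrow> (u, z) \<notin> G)"
  shows "compatible (PG T G) PG_le p r"
proof (rule PG_compatibleI[OF assms(1) PG_piece_in_PG[OF assms(2)] assms(3)])
  have near: "\<exists>b c L. (b, c, L) \<in> S \<and> u \<in> L \<inter> W (b, c, L)" if u: "u \<in> fst p" for u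
  proof -
    obtain b c L where t: "(b, c, L) \<in> S" "fst p \<inter> b = {u}" "u \<in> c" "u \<in> L"
      by (rule PG_piece_point[OF assms(2) u])
    then show ?thesis
      using assms(5)[OF t(1)] by auto
  qed
  show "fst p \<subseteq> snd r"
    using near assms(6) by blast
  have "X \<subseteq> snd p" if "X \<in> {c | b c L. (b, c, L) \<in> S}" for X
  proof -
    from that obtain b L where "(b, X, L) \<in> S" by blast
    then show ?thesis
      using PG_piece_component[OF assms(2)] by blast
  qed
  then have "\<Union>{c | b c L. (b, c, L) \<in> S} \<subseteq> snd p"
    by (rule Union_least)
  moreover have "fst r \<subseteq> snd r"
    using assms(3) unfolding PG_iff by simp
  ultimately show "fst r \<subseteq> snd p"
    using assms(4) by (meson order_trans)
  show "(u, z) \<notin> G" if "u \<in> fst p" "z \<in> fst r" "u \<noteq> z" for u z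
    using near[OF that(1)] assms(6) that(2,3) by blast
qed

lemma PG_piece_sequence_cluster:
  fixes s :: "nat \<Rightarrow> 'a set \<times> 'a set"
  assumes "compact_space T" and "finite S" and "range s \<subseteq> PG_piece T G S"
  shows "\<exists>y. (\<forall>b c L. (b, c, L) \<in> S \<longrightarrow> y (b, c, L) \<in> c) \<and>
    (\<forall>W. (\<forall>t\<in>S. openin T (W t) \<and> y t \<in> W t) \<longrightarrow>
       infinite {m. \<forall>t\<in>S. the_elem (fst (s m) \<inter> fst t) \<in> W t})"
proof -
  define x where "x m t = the_elem (fst (s m) \<inter> fst t)" for m and t :: "'a set \<times> 'a set \<times> 'a set"
  have piece: "s m \<in> PG_piece T G S" for m
    using assms(3) by blast
  have x: "x m (b, c, L) \<in> fst (s m) \<inter> b" if t: "(b, c, L) \<in> S" for m b c L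
  proof -
    obtain z where "fst (s m) \<inter> b = {z}"
      using PG_piece_component[OF piece[of m] t] by blast
    then show ?thesis
      unfolding x_def by simp
  qed
  have xT: "x m t \<in> topspace T" if "t \<in> S" for m t
    using x[of "fst t" "fst (snd t)" "snd (snd t)" m] PG_piece_in_PG[OF piece[of m]] that
    unfolding PG_iff by auto
  obtain y where y: "\<forall>t\<in>S. y t \<in> topspace T"
    and cluster: "\<forall>W. (\<forall>t\<in>S. openin T (W t) \<and> y t \<in> W t) \<longrightarrow> infinite {m. \<forall>t\<in>S. x m t \<in> W t}"
    using compact_space_cluster_point_finite_family[where f = x, OF assms(1,2) xT] by blast
  have "y (b, c, L) \<in> T closure_of b" if t: "(b, c, L) \<in> S" for b c L
    unfolding in_closure_of
  proof (intro conjI allI impI)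
    show "y (b, c, L) \<in> topspace T"
      using y t by blast
    fix V assume V: "y (b, c, L) \<in> V \<and> openin T V"
    define W where "W t = (if t = (b, c, L) then V else topspace T)" for t
    have "infinite {m. \<forall>t\<in>S. x m t \<in> W t}"
      using cluster V y by (simp add: W_def)
    then obtain m where "x m (b, c, L) \<in> V"
      using t not_finite_existsD unfolding W_def by fastforce
    then show "\<exists>z. z \<in> b \<and> z \<in> V"
      using x[OF t] by blast
  qed
  then have "y (b, c, L) \<in> c" if "(b, c, L) \<in> S" for b c L
    using that PG_piece_component[OF piece[of 0] that] by blast
  with cluster show ?thesis
    unfolding x_def by blast
qed

lemma PG_piece_limit_in_PG:
  assumes "p \<in> PG_piece T G S" and "finite S" and "\<And>b c L. (b, c, L) \<in> S \<Longrightarrow> y (b, c, L) \<in> c"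
  shows "(y ` S, \<Union>{c | b c L. (b, c, L) \<in> S}) \<in> PG T G"
  unfolding PG_iff fst_conv snd_conv
proof (intro conjI ballI impI)
  show "finite (y ` S)"
    using assms(2) by simp
  show "y ` S \<subseteq> \<Union>{c | b c L. (b, c, L) \<in> S}"
    using assms(3) by fastforce
  show "openin T (\<Union>{c | b c L. (b, c, L) \<in> S})"
    using PG_piece_component[OF assms(1)] by (auto intro!: openin_Union)
  then show "y ` S \<subseteq> topspace T"
    by (rule order_trans[OF \<open>y ` S \<subseteq> _\<close> openin_subset])
  fix u v assume "u \<in> y ` S" "v \<in> y ` S" "u \<noteq> v"
  then obtain t t' where tt: "t \<in> S" "t' \<in> S" "u = y t" "v = y t'" "t \<noteq> t'"
    by blast
  obtain b c L where t: "t = (b, c, L)"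
    by (rule prod_cases3)
  obtain b' c' L' where t': "t' = (b', c', L')"
    by (rule prod_cases3)
  show "(u, v) \<notin> G"
    using PG_piece_separated[OF assms(1)] assms(3) tt unfolding t t' by blast
qed

lemma PG_piece_infinitely_compatible:
  assumes "closed_graph T G" and "\<forall>(b, c, L)\<in>S. loose T G L" and "range s \<subseteq> PG_piece T G S"
    and "r \<in> PG T G" and "y ` S \<subseteq> fst r" and "snd r \<subseteq> \<Union>{c | b c L. (b, c, L) \<in> S}"
    and "\<forall>W. (\<forall>t\<in>S. openin T (W t) \<and> y t \<in> W t) \<longrightarrow>
       infinite {m. \<forall>t\<in>S. the_elem (fst (s m) \<inter> fst t) \<in> W t}"
  shows "infinite {i. compatible (PG T G) PG_le (s i) r}"
proof -
  have "\<exists>W. openin T W \<and> y t \<in> W \<and> W \<subseteq> snd r \<and>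
      (\<forall>u\<in>snd (snd t) \<inter> W. \<forall>z\<in>fst r. u \<noteq> z \<longrightarrow> (u, z) \<notin> G)" if "t \<in> S" for t
  proof -
    have "y t \<in> fst r"
      using that assms(5) by blast
    moreover have "loose T G (snd (snd t))"
      using assms(2) that by auto
    ultimately show ?thesis
      by (metis PG_loose_nbhd[OF assms(1,4)])
  qed
  then obtain W where W: "\<And>t. t \<in> S \<Longrightarrow> openin T (W t) \<and> y t \<in> W t \<and> W t \<subseteq> snd r \<and>
      (\<forall>u\<in>snd (snd t) \<inter> W t. \<forall>z\<in>fst r. u \<noteq> z \<longrightarrow> (u, z) \<notin> G)"
    by metis
  have "sym G"
    using assms(1) unfolding closed_graph_def is_graph_def by blast
  have compatible: "compatible (PG T G) PG_le (s m) r"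
    if m: "\<forall>t\<in>S. the_elem (fst (s m) \<inter> fst t) \<in> W t" for m
  proof (rule PG_piece_compatible[OF \<open>sym G\<close> _ assms(4,6)])
    show "s m \<in> PG_piece T G S"
      using assms(3) by blast
    show "the_elem (fst (s m) \<inter> b) \<in> W (b, c, L)" if "(b, c, L) \<in> S" for b c L
      using m that by auto
    show "W (b, c, L) \<subseteq> snd r \<and> (\<forall>u\<in>L \<inter> W (b, c, L). \<forall>z\<in>fst r. u \<noteq> z \<longrightarrow> (u, z) \<notin> G)"
      if "(b, c, L) \<in> S" for b c L
      using W[OF that] by simp
  qed
  have "infinite {m. \<forall>t\<in>S. the_elem (fst (s m) \<inter> fst t) \<in> W t}"
    using W assms(7) by blast
  moreover have "{m. \<forall>t\<in>S. the_elem (fst (s m) \<inter> fst t) \<in> W t} \<subseteq> {i. compatible (PG T G) PG_le (s i) r}"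
    using compatible by blast
  ultimately show ?thesis
    using infinite_super by blast
qed

lemma PG_piece_liminf_centered:
  assumes "compact_space T" and "closed_graph T G" and "finite S" and "\<forall>(b, c, L)\<in>S. loose T G L"
  shows "liminf_centered (PG T G) PG_le (PG_piece T G S)"
  unfolding liminf_centered_def
proof (intro conjI allI impI)
  show "PG_piece T G S \<subseteq> PG T G"
    using PG_piece_in_PG by blast
  fix s :: "nat \<Rightarrow> 'a set \<times> 'a set" assume s: "range s \<subseteq> PG_piece T G S"
  obtain y where y: "\<forall>b c L. (b, c, L) \<in> S \<longrightarrow> y (b, c, L) \<in> c"
    and cluster: "\<forall>W. (\<forall>t\<in>S. openin T (W t) \<and> y t \<in> W t) \<longrightarrow>
       infinite {m. \<forall>t\<in>S. the_elem (fst (s m) \<inter> fst t) \<in> W t}"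
    using PG_piece_sequence_cluster[OF assms(1,3) s] by blast
  define q where "q = (y ` S, \<Union>{c | b c L. (b, c, L) \<in> S})"
  have "q \<in> PG T G"
    unfolding q_def using y s by (intro PG_piece_limit_in_PG[of "s 0" _ _ S, OF _ assms(3)]) blast+
  moreover have "infinite {i. compatible (PG T G) PG_le (s i) r}"
    if "r \<in> PG T G" "PG_le r q" for r
    using that cluster unfolding q_def
    by (intro PG_piece_infinitely_compatible[OF assms(2,4) s]) (auto simp: PG_le_def)
  ultimately show "\<exists>q\<in>PG T G. \<forall>r\<in>PG T G. PG_le r q \<longrightarrow> infinite {i. compatible (PG T G) PG_le (s i) r}"
    by blast
qed

lemma PG_pieceI:
  assumes "p \<in> PG T G"
    and "\<And>x. x \<in> fst p \<Longrightarrow> x \<in> b x \<and> T closure_of b x \<subseteq> c x \<and> openin T (c x) \<and> c x \<subseteq> snd p \<and> x \<in> L x"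
    and "\<And>x y. x \<in> fst p \<Longrightarrow> y \<in> fst p \<Longrightarrow> x \<noteq> y \<Longrightarrow>
      disjnt (c x) (c y) \<and> (\<forall>u\<in>c x. \<forall>v\<in>c y. (u, v) \<notin> G)"
  shows "p \<in> PG_piece T G ((\<lambda>x. (b x, c x, L x)) ` fst p)"
proof -
  have pX: "fst p \<subseteq> topspace T"
    using assms(1) unfolding PG_iff by blast
  have trace: "fst p \<inter> b x = {x}" if x: "x \<in> fst p" for x
  proof (intro equalityI subsetI)
    fix y assume y: "y \<in> fst p \<inter> b x"
    then have "y \<in> c x" "y \<in> c y"
      using assms(2)[OF x] assms(2)[of y] pX closure_of_subset_Int[of T "b x"]
        closure_of_subset_Int[of T "b y"] by auto
    then show "y \<in> {x}"
      using assms(3)[OF x, of y] y unfolding disjnt_def by blast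
  qed (use assms(2) x in auto)
  have "T closure_of b x \<subseteq> c x \<and> openin T (c x) \<and> c x \<subseteq> snd p \<and> (\<exists>z\<in>L x. fst p \<inter> b x = {z})"
    if "x \<in> fst p" for x
    using assms(2)[OF that] trace[OF that] by blast
  moreover have "fst p \<subseteq> \<Union>(fst ` (\<lambda>x. (b x, c x, L x)) ` fst p)"
    using assms(2) by force
  moreover have "(u, v) \<notin> G"
    if "x \<in> fst p" "y \<in> fst p" "(b x, c x, L x) \<noteq> (b y, c y, L y)" "u \<in> c x" "v \<in> c y" for x y u v
    using assms(3)[of x y] that by fastforce
  ultimately show ?thesis
    unfolding PG_piece_def using assms(1) by auto
qed

lemma PG_piece_cover:
  assumes "closed_graph T G" and "Hausdorff_space T" and "regular_space T"
    and "\<forall>V\<in>\<B>. openin T V" and "\<forall>U x. openin T U \<and> x \<in> U \<longrightarrow> (\<exists>V\<in>\<B>. x \<in> V \<and> V \<subseteq> U)"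
    and "topspace T \<subseteq> \<Union>\<F>" and "p \<in> PG T G"
  obtains S where "finite S" "S \<subseteq> \<B> \<times> \<B> \<times> \<F>" "p \<in> PG_piece T G S"
proof -
  have p: "finite (fst p)" "anticlique T G (fst p)" "openin T (snd p)" "fst p \<subseteq> snd p"
    using assms(7) by (auto simp: PG_def)
  obtain N where N: "\<And>x. x \<in> fst p \<Longrightarrow> openin T (N x) \<and> x \<in> N x"
    and N_sep: "\<And>x y. x \<in> fst p \<Longrightarrow> y \<in> fst p \<Longrightarrow> x \<noteq> y \<Longrightarrow>
      disjnt (N x) (N y) \<and> (\<forall>u\<in>N x. \<forall>v\<in>N y. (u, v) \<notin> G)"
    by (rule finite_anticlique_separating_nbhds[OF assms(1,2) p(1,2)]) (rule that)
  have "\<exists>b c L. b \<in> \<B> \<and> c \<in> \<B> \<and> L \<in> \<F> \<and> x \<in> b \<and> T closure_of b \<subseteq> c \<and> c \<subseteq> N x \<inter> snd p \<and> x \<in> L"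
    if x: "x \<in> fst p" for x
  proof -
    have "openin T (N x \<inter> snd p)" "x \<in> N x \<inter> snd p"
      using N[OF x] p(3,4) x by auto
    then obtain b c where "b \<in> \<B>" "c \<in> \<B>" "x \<in> b" "T closure_of b \<subseteq> c" "c \<subseteq> N x \<inter> snd p"
      by (rule regular_space_base_closure_shrink[OF assms(3-5)]) (rule that)
    moreover have "x \<in> topspace T"
      using p(2) x unfolding anticlique_def by blast
    then obtain L where "L \<in> \<F>" "x \<in> L"
      using assms(6) by blast
    ultimately show ?thesis by blast
  qed
  then obtain b c L where bcL: "\<And>x. x \<in> fst p \<Longrightarrow> b x \<in> \<B> \<and> c x \<in> \<B> \<and> L x \<in> \<F> \<and> x \<in> b x \<and>
      T closure_of b x \<subseteq> c x \<and> c x \<subseteq> N x \<inter> snd p \<and> x \<in> L x"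
    by metis
  have "p \<in> PG_piece T G ((\<lambda>x. (b x, c x, L x)) ` fst p)"
  proof (rule PG_pieceI[OF assms(7)])
    show "x \<in> b x \<and> T closure_of b x \<subseteq> c x \<and> openin T (c x) \<and> c x \<subseteq> snd p \<and> x \<in> L x"
      if "x \<in> fst p" for x
      using bcL[OF that] assms(4) by blast
    show "disjnt (c x) (c y) \<and> (\<forall>u\<in>c x. \<forall>v\<in>c y. (u, v) \<notin> G)"
      if "x \<in> fst p" "y \<in> fst p" "x \<noteq> y" for x y
      using N_sep[OF that] bcL[OF that(1)] bcL[OF that(2)] unfolding disjnt_def by blast
  qed
  moreover have "finite ((\<lambda>x. (b x, c x, L x)) ` fst p)" "(\<lambda>x. (b x, c x, L x)) ` fst p \<subseteq> \<B> \<times> \<B> \<times> \<F>"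
    using p(1) bcL by auto
  ultimately show thesis
    using that by blast
qed

lemma PG_countable_pieces:
  assumes "closed_graph T G" and "Hausdorff_space T" and "regular_space T" and "second_countable T"
    and "countable \<F>" and "topspace T \<subseteq> \<Union>\<F>"
  obtains \<B> where "countable (PG_piece T G ` {S. finite S \<and> S \<subseteq> \<B> \<times> \<B> \<times> \<F>})"
    "\<Union>(PG_piece T G ` {S. finite S \<and> S \<subseteq> \<B> \<times> \<B> \<times> \<F>}) = PG T G"
proof -
  obtain \<B> where "countable \<B>" and \<B>: "\<forall>V\<in>\<B>. openin T V" "\<forall>U x. openin T U \<and> x \<in> U \<longrightarrow> (\<exists>V\<in>\<B>. x \<in> V \<and> V \<subseteq> U)"
    using assms(4) unfolding second_countable_def by metis
  let ?pieces = "PG_piece T G ` {S. finite S \<and> S \<subseteq> \<B> \<times> \<B> \<times> \<F>}"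
  have "countable ?pieces"
    using \<open>countable \<B>\<close> assms(5) by (intro countable_image countable_Collect_finite_subset) simp
  moreover have "\<Union>?pieces \<subseteq> PG T G"
    using PG_piece_in_PG by blast
  moreover have "PG T G \<subseteq> \<Union>?pieces"
  proof
    fix p assume "p \<in> PG T G"
    then obtain S where "finite S" "S \<subseteq> \<B> \<times> \<B> \<times> \<F>" "p \<in> PG_piece T G S"
      by (rule PG_piece_cover[OF assms(1-3) \<B> assms(6)]) (rule that)
    then show "p \<in> \<Union>?pieces"
      by blast
  qed
  ultimately show thesis
    using that by blast
qed

lemma sigma_centered_if_chi_countable:
  assumes "closed_graph T G" and "Hausdorff_space T" and "regular_space T" and "second_countable T"
    and "chi_countable T G"
  shows "sigma_centered (PG T G) PG_le"
proof -
  obtain \<F> where \<F>: "countable \<F>" "topspace T \<subseteq> \<Union>\<F>" and anti: "\<forall>A\<in>\<F>. anticlique T G A"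
    using assms(5) unfolding chi_countable_def by metis
  obtain \<B> where "countable (PG_piece T G ` {S. finite S \<and> S \<subseteq> \<B> \<times> \<B> \<times> \<F>})"
    "\<Union>(PG_piece T G ` {S. finite S \<and> S \<subseteq> \<B> \<times> \<B> \<times> \<F>}) = PG T G"
    by (rule PG_countable_pieces[OF assms(1-4) \<F>]) (rule that)
  moreover have "centered (PG T G) PG_le (PG_piece T G S)" if S: "S \<subseteq> \<B> \<times> \<B> \<times> \<F>" for S
  proof (rule PG_piece_centered, intro ballI, clarify)
    fix b c L assume "(b, c, L) \<in> S"
    then show "anticlique T G L"
      using S anti by blast
  qed
  ultimately show ?thesis
    unfolding sigma_centered_def
    by (intro exI[of _ "PG_piece T G ` {S. finite S \<and> S \<subseteq> \<B> \<times> \<B> \<times> \<F>}"] conjI ballI) auto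
qed

lemma sigma_liminf_centered_if_lambda_countable:
  assumes "compact_space T" and "closed_graph T G" and "Hausdorff_space T" and "regular_space T"
    and "second_countable T" and "lambda_countable T G"
  shows "sigma_liminf_centered (PG T G) PG_le"
proof -
  obtain \<F> where \<F>: "countable \<F>" "topspace T \<subseteq> \<Union>\<F>" and loose: "\<forall>A\<in>\<F>. loose T G A"
    using assms(6) unfolding lambda_countable_def by metis
  obtain \<B> where "countable (PG_piece T G ` {S. finite S \<and> S \<subseteq> \<B> \<times> \<B> \<times> \<F>})"
    "\<Union>(PG_piece T G ` {S. finite S \<and> S \<subseteq> \<B> \<times> \<B> \<times> \<F>}) = PG T G"
    by (rule PG_countable_pieces[OF assms(2-5) \<F>]) (rule that)
  moreover have "liminf_centered (PG T G) PG_le (PG_piece T G S)"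
    if S: "finite S" "S \<subseteq> \<B> \<times> \<B> \<times> \<F>" for S
  proof (rule PG_piece_liminf_centered[OF assms(1,2) S(1)], intro ballI, clarify)
    fix b c L assume "(b, c, L) \<in> S"
    then show "loose T G L"
      using S(2) loose by blast
  qed
  ultimately show ?thesis
    unfolding sigma_liminf_centered_def
    by (intro exI[of _ "PG_piece T G ` {S. finite S \<and> S \<subseteq> \<B> \<times> \<B> \<times> \<F>}"] conjI ballI) auto
qed

theorem theorem3p7:
  fixes T :: "'a topology" and G :: "('a \<times> 'a) set"
  assumes "compact_space T" and "metrizable_space T" and "closed_graph T G"
  shows "(sigma_centered (PG T G) PG_le \<longleftrightarrow> chi_countable T G) \<and>
         (sigma_liminf_centered (PG T G) PG_le \<longleftrightarrow> lambda_countable T G)"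
proof -
  have H: "Hausdorff_space T" and R: "regular_space T"
    using assms(2) by (simp_all add: metrizable_imp_Hausdorff_space metrizable_imp_regular_space)
  have "second_countable T"
    using assms(1,2) Metric_space.compact_space_imp_second_countable
    unfolding metrizable_space_def by metis
  moreover have "is_graph T G"
    using assms(3) unfolding closed_graph_def by blast
  ultimately show ?thesis
    using chi_countable_if_sigma_centered sigma_centered_if_chi_countable[OF assms(3) H R]
      lambda_countable_if_sigma_liminf_centered[OF assms(2)]
      sigma_liminf_centered_if_lambda_countable[OF assms(1,3) H R]
    by blast
qed

end
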